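(* Let $q$ be a prime power, $n\ge 2$, $K=\mathbb{F}_{q^n}$, $d=\frac{q^n-1}{q-1}$, and for $1\le i\le n-1$ let $E_{i,\mathrm{Kum}}=K(x,y)$ with $y^d=s_{n,i}(x)$. Then $E_{i,\mathrm{Kum}}\cong E_{n-i,\mathrm{Kum}}$ as function fields over $K$.
   Context: For a prime power $q$ and integers $n\ge 1$, $0\le i\le n$, the $i$-th $(n,q)$-elementary symmetric polynomial is $s_{n,i}(t)=\sum_{0\le j_1<\dots<j_i\le n-1} t^{q^{j_1}+\dots+q^{j_i}}\in\mathbb{F}_p[t]$. *)

theory Defs
  imports "HOL-Computational_Algebra.Computational_Algebra"
begin

definition esym_q :: "nat \<Rightarrow> nat \<Rightarrow> nat \<Rightarrow> 'a::comm_ring_1 poly" where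
  "esym_q q n i = (\<Sum>S\<in>{S. S \<subseteq> {..<n} \<and> card S = i}. monom 1 (\<Sum>j\<in>S. q ^ j))"

definition rat_const :: "'k::field \<Rightarrow> 'k poly fract" where
  "rat_const c = Fract [:c:] 1"

definition rat_of_poly :: "'k::field poly \<Rightarrow> 'k poly fract" where
  "rat_of_poly p = Fract p 1"

text \<open>The defining polynomial of the Kummer function field
  E = K(x)[y] / (y^d - s_{n,i}(x)), as a polynomial in y over K(x).\<close>
definition kummer_poly :: "nat \<Rightarrow> nat \<Rightarrow> nat \<Rightarrow> ('k::field poly fract) poly" where
  "kummer_poly q n i =
     monom 1 ((q ^ n - 1) div (q - 1)) - [: rat_of_poly (esym_q q n i) :]"

text \<open>Canonical representatives of the quotient ring K(x)[y]/(P): the polynomials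
  of degree < deg P, with addition and multiplication followed by reduction mod P.\<close>
definition quot_carrier :: "'a::field poly \<Rightarrow> 'a poly set" where
  "quot_carrier P = {a. degree a < degree P}"

definition K_alg_iso_quot :: "('k::field poly fract) poly \<Rightarrow> ('k poly fract) poly \<Rightarrow> bool" where
  "K_alg_iso_quot P1 P2 \<longleftrightarrow>
     (\<exists>\<phi>. bij_betw \<phi> (quot_carrier P1) (quot_carrier P2) \<and>
        (\<forall>a\<in>quot_carrier P1. \<forall>b\<in>quot_carrier P1.
            \<phi> (a + b) = \<phi> a + \<phi> b \<and> \<phi> ((a * b) mod P1) = (\<phi> a * \<phi> b) mod P2) \<and>
        \<phi> 1 = 1 \<and>
        (\<forall>c::'k. \<phi> [: rat_const c :] = [: rat_const c :]))"

end

(* The K-automorphism x -> 1/x of K(x), extended to K(x)[y] by y -> y/x, does the job.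
   Complementing the index sets gives s_{n,i}(1/x) = x^(-d) s_{n,n-i}(x) with
   d = 1 + q + ... + q^(n-1), so y^d - s_{n,i}(x) is sent to x^(-d) (y^d - s_{n,n-i}(x)).
   As the map preserves the degree in y, it carries the reduced residues modulo the first
   polynomial onto those modulo the second. *)

theory Submission
  imports Defs
begin

lemma map_poly_add:
  assumes "\<And>x y. f (x + y) = f x + f y" and "f 0 = 0"
  shows "map_poly f (p + q) = map_poly f p + map_poly f q"
  by (rule poly_eqI) (simp add: coeff_map_poly assms)

lemma map_poly_mult:
  fixes f :: "'a::comm_ring_1 \<Rightarrow> 'b::comm_ring_1"
  assumes add: "\<And>x y. f (x + y) = f x + f y"
    and mult: "\<And>x y. f (x * y) = f x * f y" and zero: "f 0 = 0"
  shows "map_poly f (p * q) = map_poly f p * map_poly f q"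
proof (induction p)
  case (pCons a p)
  have "map_poly f (smult a q) = smult (f a) (map_poly f q)"
    by (rule poly_eqI) (simp add: coeff_map_poly mult zero)
  with pCons show ?case
    by (simp add: map_poly_pCons map_poly_add[OF add zero] zero)
qed simp

lemma map_poly_sum:
  assumes "\<And>x y. f (x + y) = f x + f y" and "f 0 = 0"
  shows "map_poly f (sum g A) = (\<Sum>x\<in>A. map_poly f (g x))"
  by (induction A rule: infinite_finite_induct) (simp_all add: map_poly_add[OF assms])

definition fract_lift :: "('a::idom \<Rightarrow> 'b::field) \<Rightarrow> 'a fract \<Rightarrow> 'b" where
  "fract_lift h z = (let ab = SOME ab. snd ab \<noteq> 0 \<and> z = Fract (fst ab) (snd ab)
                     in h (fst ab) / h (snd ab))"

context
  fixes h :: "'a::idom \<Rightarrow> 'b::field"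
  assumes h_add: "\<And>a b. h (a + b) = h a + h b"
    and h_mult: "\<And>a b. h (a * b) = h a * h b"
    and h_1: "h 1 = 1"
    and h_eq_0: "\<And>a. h a = 0 \<Longrightarrow> a = 0"
begin

lemma fract_lift_Fract:
  assumes "b \<noteq> 0"
  shows "fract_lift h (Fract a b) = h a / h b"
proof -
  define ab where "ab = (SOME ab. snd ab \<noteq> 0 \<and> Fract a b = Fract (fst ab) (snd ab))"
  have "\<exists>ab. snd ab \<noteq> 0 \<and> Fract a b = Fract (fst ab) (snd ab)"
    using assms by (intro exI[of _ "(a, b)"]) simp
  then have ab: "snd ab \<noteq> 0" "Fract a b = Fract (fst ab) (snd ab)"
    unfolding ab_def by (metis (mono_tags, lifting) someI_ex)+
  then have "h a * h (snd ab) = h (fst ab) * h b"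
    using assms by (metis eq_fract(1) h_mult)
  moreover have "h b \<noteq> 0" "h (snd ab) \<noteq> 0"
    using assms ab(1) h_eq_0 by blast+
  ultimately show ?thesis
    unfolding fract_lift_def ab_def[symmetric] by (simp add: field_simps)
qed

lemma fract_lift_0: "fract_lift h 0 = 0"
proof -
  have "h 0 = 0"
    using h_add[of 0 0] by (metis add_cancel_right_right)
  then show ?thesis
    by (simp add: Zero_fract_def fract_lift_Fract)
qed

lemma fract_lift_to_fract: "fract_lift h (to_fract a) = h a"
  by (simp add: to_fract_def fract_lift_Fract h_1)

lemma fract_lift_add: "fract_lift h (x + y) = fract_lift h x + fract_lift h y"
proof (cases x; cases y)
  fix a b c d
  assume x: "x = Fract a b" "b \<noteq> 0" and y: "y = Fract c d" "d \<noteq> 0"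
  then have "h b \<noteq> 0" "h d \<noteq> 0" using h_eq_0 by blast+
  with x y show ?thesis by (simp add: fract_lift_Fract h_add h_mult field_simps)
qed

lemma fract_lift_mult: "fract_lift h (x * y) = fract_lift h x * fract_lift h y"
proof (cases x; cases y)
  fix a b c d
  assume x: "x = Fract a b" "b \<noteq> 0" and y: "y = Fract c d" "d \<noteq> 0"
  then show ?thesis by (simp add: fract_lift_Fract h_mult)
qed

lemma fract_lift_inverse: "fract_lift h (inverse x) = inverse (fract_lift h x)"
proof (cases x)
  case (Fract a b)
  then show ?thesis
    by (cases "a = 0") (simp_all add: fract_lift_Fract fract_lift_0 fract_collapse)
qed

end

lemma rat_const_conv_to_fract: "rat_const c = to_fract [:c:]"
  by (simp add: rat_const_def to_fract_def)

lemma rat_of_poly_conv_to_fract: "rat_of_poly p = to_fract p"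
  by (simp add: rat_of_poly_def to_fract_def)

lemma rat_const_add: "rat_const (a + b) = rat_const a + rat_const b"
  by (simp add: rat_const_conv_to_fract flip: to_fract_add)

lemma rat_const_mult: "rat_const (a * b) = rat_const a * rat_const b"
  by (simp add: rat_const_conv_to_fract flip: to_fract_mult)

lemma rat_const_0 [simp]: "rat_const 0 = 0"
  by (simp add: rat_const_conv_to_fract)

lemma rat_const_1 [simp]: "rat_const 1 = 1"
  by (simp add: rat_const_conv_to_fract pCons_one)

definition fract_var :: "'k::field poly fract" where
  "fract_var = to_fract [:0, 1:]"

lemma fract_var_neq_0 [simp]: "fract_var \<noteq> 0"
  by (simp add: fract_var_def)

definition subst_var :: "'k::field poly \<Rightarrow> 'k poly fract \<Rightarrow> 'k poly fract" where
  "subst_var p w = poly (map_poly rat_const p) w"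

lemma subst_var_add: "subst_var (p + q) w = subst_var p w + subst_var q w"
  by (simp add: subst_var_def map_poly_add[OF rat_const_add rat_const_0])

lemma subst_var_mult: "subst_var (p * q) w = subst_var p w * subst_var q w"
  by (simp add: subst_var_def map_poly_mult[OF rat_const_add rat_const_mult rat_const_0])

lemma subst_var_pCons: "subst_var (pCons c p) w = rat_const c + w * subst_var p w"
  by (simp add: subst_var_def map_poly_pCons)

lemma subst_var_0 [simp]: "subst_var 0 w = 0"
  by (simp add: subst_var_def)

lemma subst_var_const [simp]: "subst_var [:c:] w = rat_const c"
  by (simp add: subst_var_pCons)

lemma subst_var_1 [simp]: "subst_var 1 w = 1"
  by (simp add: subst_var_def)

lemma subst_var_fract_var: "subst_var p fract_var = to_fract p"
proof (induction p)
  case (pCons c p)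
  have "to_fract (pCons c p) = to_fract [:c:] + to_fract [:0, 1:] * to_fract p"
    by (simp flip: to_fract_add to_fract_mult)
  with pCons show ?case
    by (simp add: subst_var_pCons rat_const_conv_to_fract fract_var_def)
qed simp

lemma reflect_poly_map_poly:
  assumes "\<And>x. f x = 0 \<longleftrightarrow> x = 0"
  shows "reflect_poly (map_poly f p) = map_poly f (reflect_poly p)"
proof -
  have "degree (map_poly f p) = degree p"
    by (rule degree_map_poly) (use assms in auto)
  then show ?thesis
    using assms by (intro poly_eqI) (simp add: coeff_reflect_poly coeff_map_poly)
qed

lemma subst_var_inverse_fract_var_eq_0_iff:
  "subst_var p (inverse fract_var) = 0 \<longleftrightarrow> p = 0"
proof
  assume "subst_var p (inverse fract_var) = 0"
  then have "poly (reflect_poly (map_poly rat_const p)) fract_var = 0"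
    by (simp add: poly_reflect_poly_nz subst_var_def)
  then have "to_fract (reflect_poly p) = 0"
    by (simp add: reflect_poly_map_poly rat_const_conv_to_fract
                  subst_var_fract_var[unfolded subst_var_def])
  then show "p = 0" by simp
qed (simp add: subst_var_def)

definition recip_subst :: "'k::field poly fract \<Rightarrow> 'k poly fract" where
  "recip_subst = fract_lift (\<lambda>p. subst_var p (inverse fract_var))"

lemmas subst_var_inverse_fract_var_hom =
  subst_var_add subst_var_mult subst_var_1 subst_var_inverse_fract_var_eq_0_iff

lemma recip_subst_to_fract: "recip_subst (to_fract p) = subst_var p (inverse fract_var)"
  unfolding recip_subst_def
  by (rule fract_lift_to_fract) (simp_all add: subst_var_inverse_fract_var_hom)

lemma recip_subst_add: "recip_subst (x + y) = recip_subst x + recip_subst y"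
  unfolding recip_subst_def
  by (rule fract_lift_add) (simp_all add: subst_var_inverse_fract_var_hom)

lemma recip_subst_mult: "recip_subst (x * y) = recip_subst x * recip_subst y"
  unfolding recip_subst_def
  by (rule fract_lift_mult) (simp_all add: subst_var_inverse_fract_var_hom)

lemma recip_subst_inverse: "recip_subst (inverse x) = inverse (recip_subst x)"
  unfolding recip_subst_def
  by (rule fract_lift_inverse) (simp_all add: subst_var_inverse_fract_var_hom)

lemma recip_subst_0 [simp]: "recip_subst 0 = 0"
  using recip_subst_to_fract[of 0] by simp

lemma recip_subst_1 [simp]: "recip_subst 1 = 1"
  using recip_subst_to_fract[of 1] by simp

lemma recip_subst_rat_const [simp]: "recip_subst (rat_const c) = rat_const c"
  using recip_subst_to_fract[of "[:c:]"] by (simp add: rat_const_conv_to_fract)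

lemma recip_subst_fract_var: "recip_subst fract_var = inverse fract_var"
  by (simp add: fract_var_def recip_subst_to_fract subst_var_pCons)

lemma recip_subst_power: "recip_subst (x ^ k) = recip_subst x ^ k"
  by (induction k) (simp_all add: recip_subst_mult)

lemma recip_subst_subst_var: "recip_subst (subst_var p w) = subst_var p (recip_subst w)"
  by (induction p) (simp_all add: subst_var_pCons recip_subst_add recip_subst_mult)

lemma recip_subst_recip_subst [simp]: "recip_subst (recip_subst x) = x"
proof (cases x)
  case (Fract a b)
  have "recip_subst (recip_subst (to_fract p)) = to_fract p" for p :: "'a poly"
    by (simp add: recip_subst_to_fract recip_subst_subst_var recip_subst_inverse
                  recip_subst_fract_var subst_var_fract_var)
  then show ?thesis
    by (simp add: Fract Fract_conv_to_fract divide_inverse recip_subst_mult recip_subst_inverse)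
qed

lemma recip_subst_eq_0_iff [simp]: "recip_subst x = 0 \<longleftrightarrow> x = 0"
  by (metis recip_subst_0 recip_subst_recip_subst)

definition recip_aut :: "'k::field poly fract poly \<Rightarrow> 'k poly fract poly" where
  "recip_aut a = pcompose (map_poly recip_subst a) [:0, inverse fract_var:]"

lemma coeff_recip_aut: "coeff (recip_aut a) k = inverse fract_var ^ k * recip_subst (coeff a k)"
  by (simp add: recip_aut_def coeff_pcompose_linear coeff_map_poly)

lemma recip_aut_add: "recip_aut (a + b) = recip_aut a + recip_aut b"
  by (simp add: recip_aut_def map_poly_add[OF recip_subst_add recip_subst_0] pcompose_add)

lemma recip_aut_mult: "recip_aut (a * b) = recip_aut a * recip_aut b"
  by (simp add: recip_aut_def map_poly_mult[OF recip_subst_add recip_subst_mult recip_subst_0]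
                pcompose_mult)

lemma recip_aut_const [simp]: "recip_aut [:z:] = [:recip_subst z:]"
  by (simp add: recip_aut_def map_poly_pCons)

lemma recip_aut_1 [simp]: "recip_aut 1 = 1"
  using recip_aut_const[of 1] by (simp add: pCons_one)

lemma recip_aut_diff: "recip_aut (a - b) = recip_aut a - recip_aut b"
  by (metis recip_aut_add diff_add_cancel add_diff_cancel_right')

lemma degree_recip_aut [simp]: "degree (recip_aut a) = degree a"
proof -
  have "degree (map_poly recip_subst a) = degree a"
    by (rule degree_map_poly) simp
  then show ?thesis
    by (simp add: recip_aut_def degree_pcompose)
qed

lemma recip_aut_recip_aut [simp]: "recip_aut (recip_aut a) = a"
proof (rule poly_eqI)
  fix k
  have "recip_subst (inverse fract_var ^ k) * inverse fract_var ^ k = (1 :: 'a poly fract)"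
    by (simp add: recip_subst_power recip_subst_inverse recip_subst_fract_var
             flip: power_mult_distrib)
  then show "coeff (recip_aut (recip_aut a)) k = coeff a k"
    by (simp add: coeff_recip_aut recip_subst_mult mult_ac)
qed

lemma recip_aut_monom: "recip_aut (monom c k) = monom (inverse fract_var ^ k * recip_subst c) k"
  by (rule poly_eqI) (simp add: coeff_recip_aut coeff_monom)

lemma K_alg_iso_quotI:
  fixes \<Phi> :: "'k::field poly fract poly \<Rightarrow> 'k poly fract poly"
  assumes add: "\<And>a b. \<Phi> (a + b) = \<Phi> a + \<Phi> b"
    and mult: "\<And>a b. \<Phi> (a * b) = \<Phi> a * \<Phi> b"
    and one: "\<Phi> 1 = 1"
    and const: "\<And>c. \<Phi> [:rat_const c:] = [:rat_const c:]"
    and degree_eq: "\<And>a. degree (\<Phi> a) = degree a"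
    and involution: "\<And>a. \<Phi> (\<Phi> a) = a"
    and P1_image: "\<Phi> P1 = smult u P2" and "u \<noteq> 0"
  shows "K_alg_iso_quot P1 P2"
proof -
  have carrier: "quot_carrier P2 = quot_carrier P1"
    using degree_eq[of P1] \<open>u \<noteq> 0\<close> by (simp add: P1_image quot_carrier_def)
  have zero: "\<Phi> 0 = 0"
    using add[of 0 0] by (metis add_cancel_right_right)
  have mod: "\<Phi> (x mod P1) = \<Phi> x mod P2" for x
  proof -
    have "\<Phi> x = \<Phi> (x div P1) * \<Phi> P1 + \<Phi> (x mod P1)"
      by (metis add mult div_mult_mod_eq)
    then have "\<Phi> x = \<Phi> (x mod P1) + smult u (\<Phi> (x div P1)) * P2"
      by (simp add: P1_image add.commute)
    then have "\<Phi> x mod P2 = \<Phi> (x mod P1) mod P2"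
      by (metis mod_mult_self1)
    also have "\<dots> = \<Phi> (x mod P1)"
    proof (cases "P1 = 0")
      case False
      then have "x mod P1 = 0 \<or> degree (x mod P1) < degree P1"
        by (rule degree_mod_less)
      then show ?thesis
        using degree_eq[of P1] \<open>u \<noteq> 0\<close>
        by (auto simp: P1_image degree_eq zero intro: mod_poly_less)
    qed (use P1_image \<open>u \<noteq> 0\<close> zero in simp)
    finally show ?thesis ..
  qed
  have "bij_betw \<Phi> (quot_carrier P1) (quot_carrier P2)"
    unfolding carrier
    by (rule bij_betw_byWitness[where f' = \<Phi>])
       (auto simp: involution degree_eq quot_carrier_def)
  then show ?thesis
    unfolding K_alg_iso_quot_def by (intro exI[of _ \<Phi>]) (simp add: add mult mod one const)
qed

lemma bij_betw_Diff_card_subsets: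
  assumes "finite A" and "i \<le> card A"
  shows "bij_betw (\<lambda>S. A - S) {S. S \<subseteq> A \<and> card S = i} {T. T \<subseteq> A \<and> card T = card A - i}"
  by (rule bij_betw_byWitness[where f' = "\<lambda>T. A - T"])
     (use assms in \<open>auto simp: card_Diff_subset finite_subset\<close>)

lemma sum_subsets_inverse_power:
  fixes w :: "'a::field"
  assumes "w \<noteq> 0" and "finite A" and "i \<le> card A"
  shows "(\<Sum>S | S \<subseteq> A \<and> card S = i. inverse w ^ (\<Sum>j\<in>S. f j))
       = inverse w ^ (\<Sum>j\<in>A. f j) * (\<Sum>T | T \<subseteq> A \<and> card T = card A - i. w ^ (\<Sum>j\<in>T. f j))"
proof -
  have "inverse w ^ (\<Sum>j\<in>A. f j) * w ^ (\<Sum>j\<in>A - S. f j) = inverse w ^ (\<Sum>j\<in>S. f j)"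
    if "S \<subseteq> A" for S
  proof -
    have "(\<Sum>j\<in>A. f j) = (\<Sum>j\<in>S. f j) + (\<Sum>j\<in>A - S. f j)"
      using sum.subset_diff[OF that \<open>finite A\<close>] by (simp add: add.commute)
    with \<open>w \<noteq> 0\<close> show ?thesis
      by (simp add: power_add mult.assoc flip: power_mult_distrib)
  qed
  then show ?thesis
    by (simp add: sum_distrib_left
                  flip: sum.reindex_bij_betw[OF bij_betw_Diff_card_subsets[OF assms(2,3)]])
qed

lemma subst_var_esym_q:
  "subst_var (esym_q q n i) w = (\<Sum>S | S \<subseteq> {..<n} \<and> card S = i. w ^ (\<Sum>j\<in>S. q ^ j))"
  by (simp add: subst_var_def esym_q_def map_poly_sum[OF rat_const_add rat_const_0]
                map_poly_monom poly_sum poly_monom)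

lemma subst_var_esym_q_inverse:
  assumes "w \<noteq> 0" and "i \<le> n"
  shows "subst_var (esym_q q n i) (inverse w)
       = inverse w ^ (\<Sum>j<n. q ^ j) * subst_var (esym_q q n (n - i)) w"
  using sum_subsets_inverse_power[of w "{..<n}" i "\<lambda>j. q ^ j"] assms
  by (simp add: subst_var_esym_q)

lemma geometric_sum_nat:
  fixes q :: nat
  assumes "q \<ge> 2"
  shows "(q ^ n - 1) div (q - 1) = (\<Sum>j<n. q ^ j)"
proof -
  have "int (q ^ n - 1) = int (q - 1) * int (\<Sum>j<n. q ^ j)"
    using assms power_diff_1_eq[of "int q" n] by (simp add: of_nat_diff)
  then have "q ^ n - 1 = (q - 1) * (\<Sum>j<n. q ^ j)"
    by (metis of_nat_eq_iff of_nat_mult)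
  with assms show ?thesis
    by simp
qed

lemma recip_aut_kummer_poly:
  assumes "q \<ge> 2" and "i \<le> n"
  shows "recip_aut (kummer_poly q n i)
       = smult (inverse fract_var ^ (\<Sum>j<n. q ^ j)) (kummer_poly q n (n - i))"
  unfolding kummer_poly_def geometric_sum_nat[OF assms(1)]
  by (simp add: rat_of_poly_conv_to_fract recip_aut_diff recip_aut_monom recip_subst_to_fract
                subst_var_esym_q_inverse[OF fract_var_neq_0 assms(2)] subst_var_fract_var
                smult_diff_right smult_monom)

theorem lemma4p26:
  fixes q n i :: nat
  assumes "\<exists>p k. prime p \<and> k > 0 \<and> q = p ^ k"
    and "n \<ge> 2"
    and "card (UNIV :: 'k::{field,finite} set) = q ^ n"
    and "1 \<le> i" and "i \<le> n - 1"
  shows "K_alg_iso_quot (kummer_poly q n i :: ('k poly fract) poly) (kummer_poly q n (n - i))"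
proof -
  obtain p k where "prime p" "k > 0" "q = p ^ k"
    using assms(1) by blast
  then have "q \<ge> 2"
    using prime_ge_2_nat[of p] self_le_power[of p k] by simp
  moreover have "i \<le> n"
    using assms(5) by simp
  ultimately show ?thesis
    by (intro K_alg_iso_quotI[OF recip_aut_add recip_aut_mult recip_aut_1 _ degree_recip_aut
                                 recip_aut_recip_aut recip_aut_kummer_poly]) simp_all
qed

end
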